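(* Let $d\ge1$, let $Z$ be a simple $d$-cycle, and let $s\ge1$. Deleting any $s$ vertices from the facet graph $G_d(Z)$ leaves a graph with at most $s$ connected components.
   Context: Fix a field $\mathbb F$. A $d$-simplex is a $(d+1)$-element subset of $[n]$ oriented by increasing order $s_1<\dots<s_{d+1}$. A $d$-chain is a formal $\mathbb F$-combination of $d$-simplices with support the set of simplices with nonzero coefficient; $\partial\sigma=\sum_i(-1)^{i-1}(\sigma\setminus\{s_i\})$, extended linearly. A $d$-cycle is a chain with $\partial Z=0$; it is simple if $Z\ne0$ and every $d$-cycle supported in $\mathrm{Supp}(Z)$ is a scalar multiple of $Z$. The facet graph $G_d(Z)$ has vertex set $\mathrm{Supp}(Z)$, two $d$-simplices adjacent iff they share a $(d-1)$-face. *)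

theory Defs
  imports Main
begin

text \<open>Simplices on the vertex set [n] = {1..n} are finite sets of naturals;
  a d-simplex is a (d+1)-element subset of {1..n}, oriented by increasing order.\<close>

definition simplex :: "nat \<Rightarrow> nat \<Rightarrow> nat set \<Rightarrow> bool" where
  "simplex n d \<sigma> \<longleftrightarrow> \<sigma> \<subseteq> {1..n} \<and> card \<sigma> = d + 1"

definition supp :: "(nat set \<Rightarrow> 'a::zero) \<Rightarrow> nat set set" where
  "supp Z = {\<sigma>. Z \<sigma> \<noteq> 0}"

definition chain :: "nat \<Rightarrow> nat \<Rightarrow> (nat set \<Rightarrow> 'a::zero) \<Rightarrow> bool" where
  "chain n d Z \<longleftrightarrow> finite (supp Z) \<and> (\<forall>\<sigma>\<in>supp Z. simplex n d \<sigma>)"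

text \<open>Boundary: removing the i-th smallest vertex v of \<sigma> (i = 1 + number of
  elements of \<sigma> below v) contributes the sign (-1)^(i-1).\<close>
definition bd :: "(nat set \<Rightarrow> 'a::field) \<Rightarrow> nat set \<Rightarrow> 'a" where
  "bd Z \<tau> = (\<Sum>\<sigma>\<in>{\<sigma>\<in>supp Z. \<exists>v. v \<notin> \<tau> \<and> \<sigma> = insert v \<tau>}.
      (-1) ^ card {x\<in>\<sigma>. x < the_elem (\<sigma> - \<tau>)} * Z \<sigma>)"

definition cycle :: "nat \<Rightarrow> nat \<Rightarrow> (nat set \<Rightarrow> 'a::field) \<Rightarrow> bool" where
  "cycle n d Z \<longleftrightarrow> chain n d Z \<and> bd Z = (\<lambda>_. 0)"

definition simple_cycle :: "nat \<Rightarrow> nat \<Rightarrow> (nat set \<Rightarrow> 'a::field) \<Rightarrow> bool" where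
  "simple_cycle n d Z \<longleftrightarrow> cycle n d Z \<and> Z \<noteq> (\<lambda>_. 0) \<and>
     (\<forall>W. cycle n d W \<and> supp W \<subseteq> supp Z \<longrightarrow> (\<exists>c. W = (\<lambda>\<sigma>. c * Z \<sigma>)))"

text \<open>Adjacency in the facet graph: distinct d-simplices sharing a (d-1)-face,
  i.e. a common d-element subset.\<close>
definition facet_adj :: "nat \<Rightarrow> nat set \<Rightarrow> nat set \<Rightarrow> bool" where
  "facet_adj d \<sigma> \<tau> \<longleftrightarrow> \<sigma> \<noteq> \<tau> \<and> (\<exists>\<rho>. \<rho> \<subseteq> \<sigma> \<and> \<rho> \<subseteq> \<tau> \<and> card \<rho> = d)"

definition components :: "'v set \<Rightarrow> ('v \<Rightarrow> 'v \<Rightarrow> bool) \<Rightarrow> 'v set set" where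
  "components V adj = V // ({(x, y). x \<in> V \<and> y \<in> V \<and> adj x y}\<^sup>*)"

end

theory Submission
  imports Defs
begin

text \<open>Restrict Z to a component C of the facet graph with S deleted. The boundary of the
  restriction is nonzero, for otherwise the restriction would be a cycle supported in supp Z, hence
  a multiple of Z, yet it vanishes on S but not on C. Being a boundary, it is a nonzero cycle on
  d-element sets, so its support has at least d + 1 elements. Each such face \<tau> lies in a simplex
  of C and, since Z itself has no boundary at \<tau>, in a simplex of supp Z outside C; the two are
  adjacent, so the latter lies in S. The same adjacency argument makes the boundaries of different
  components disjoint, and all of them consist of the at most (d + 1) s faces of simplices of S.\<close>

lemma sum_antisymmetric_off_diagonal:
  fixes g :: "'i::linorder \<Rightarrow> 'i \<Rightarrow> 'a::ab_group_add"
  assumes "finite A" and antisym: "\<And>u v. u \<noteq> v \<Longrightarrow> g u v = - g v u"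
  shows "(\<Sum>u\<in>A. \<Sum>v\<in>A - {u}. g u v) = 0"
proof -
  have split: "(\<Sum>v\<in>A - {u}. g u v) = (\<Sum>v\<in>{v\<in>A. v < u}. g u v) + (\<Sum>v\<in>{v\<in>A. u < v}. g u v)" for u
  proof -
    have "A - {u} = {v\<in>A. v < u} \<union> {v\<in>A. u < v}" by auto
    moreover have "sum (g u) ({v\<in>A. v < u} \<union> {v\<in>A. u < v})
        = (\<Sum>v\<in>{v\<in>A. v < u}. g u v) + (\<Sum>v\<in>{v\<in>A. u < v}. g u v)"
      by (rule sum.union_disjoint) (use assms(1) in auto)
    ultimately show ?thesis by simp
  qed
  have "(\<Sum>u\<in>A. \<Sum>v\<in>{v\<in>A. u < v}. g u v) = (\<Sum>v\<in>A. \<Sum>u\<in>{u\<in>A. u < v}. g u v)"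
    using sum.swap_restrict[OF assms(1) assms(1)] by simp
  also have "\<dots> = - (\<Sum>v\<in>A. \<Sum>u\<in>{u\<in>A. u < v}. g v u)"
    unfolding sum_negf[symmetric] by (intro sum.cong refl) (auto intro: antisym)
  finally show ?thesis by (simp add: split sum.distrib)
qed

definition cofaces :: "(nat set \<Rightarrow> 'a::zero) \<Rightarrow> nat set \<Rightarrow> nat set set" where
  "cofaces Z \<tau> = {\<sigma>\<in>supp Z. \<exists>v. v \<notin> \<tau> \<and> \<sigma> = insert v \<tau>}"

lemma bd_cofaces:
  "bd Z \<tau> = (\<Sum>\<sigma>\<in>cofaces Z \<tau>. (-1) ^ card {x\<in>\<sigma>. x < the_elem (\<sigma> - \<tau>)} * Z \<sigma>)"
  unfolding bd_def cofaces_def ..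

lemma cofaces_nonempty_if_bd_nonzero: "bd Z \<tau> \<noteq> 0 \<Longrightarrow> cofaces Z \<tau> \<noteq> {}"
  by (auto simp: bd_cofaces)

lemma supp_bd_subset_Pow:
  assumes "\<forall>\<sigma>\<in>supp Z. \<sigma> \<subseteq> U"
  shows "supp (bd Z) \<subseteq> Pow U"
  using assms cofaces_nonempty_if_bd_nonzero by (fastforce simp: supp_def cofaces_def)

lemma bd_eq_sum_over_vertices:
  fixes Z :: "nat set \<Rightarrow> 'a::field"
  assumes "finite U" and "\<forall>\<sigma>\<in>supp Z. \<sigma> \<subseteq> U"
  shows "bd Z \<tau> = (\<Sum>v\<in>U - \<tau>. (-1) ^ card {x\<in>insert v \<tau>. x < v} * Z (insert v \<tau>))"
proof -
  let ?V = "{v\<in>U - \<tau>. Z (insert v \<tau>) \<noteq> 0}"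
  have cofaces: "cofaces Z \<tau> = (\<lambda>v. insert v \<tau>) ` ?V"
    using assms(2) by (auto simp: supp_def cofaces_def)
  have inj: "inj_on (\<lambda>v. insert v \<tau>) ?V"
    by (rule inj_onI) blast
  have "the_elem (insert v \<tau> - \<tau>) = v" if "v \<notin> \<tau>" for v
    using that by (simp add: insert_Diff_if)
  then have "bd Z \<tau> = (\<Sum>v\<in>?V. (-1) ^ card {x\<in>insert v \<tau>. x < v} * Z (insert v \<tau>))"
    unfolding bd_cofaces cofaces sum.reindex[OF inj] by (intro sum.cong) auto
  also have "\<dots> = (\<Sum>v\<in>U - \<tau>. (-1) ^ card {x\<in>insert v \<tau>. x < v} * Z (insert v \<tau>))"
    by (rule sum.mono_neutral_left) (use assms(1) in auto)
  finally show ?thesis .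
qed

lemma card_less_insert:
  fixes \<rho> :: "nat set"
  assumes "u \<notin> \<rho>"
  shows "card {x\<in>insert u \<rho>. x < v} = card {x\<in>\<rho>. x < v} + (if u < v then 1 else 0)"
proof -
  have "finite {x\<in>\<rho>. x < v}" by (rule finite_subset[of _ "{..<v}"]) auto
  moreover have "{x\<in>insert u \<rho>. x < v} = (if u < v then insert u {x\<in>\<rho>. x < v} else {x\<in>\<rho>. x < v})"
    by auto
  ultimately show ?thesis using assms by simp
qed

lemma bd_bd_eq_0:
  fixes Z :: "nat set \<Rightarrow> 'a::field"
  assumes U: "finite U" and supp_U: "\<forall>\<sigma>\<in>supp Z. \<sigma> \<subseteq> U"
  shows "bd (bd Z) = (\<lambda>_. 0)"
proof
  fix \<rho>
  define A where "A = U - \<rho>"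
  define c where "c u = card {x\<in>\<rho>. x < u}" for u
  \<comment> \<open>the coefficient of \<open>Z (\<rho> \<union> {u, v})\<close> obtained by deleting v and then u; the other
    order of deletion gives the opposite sign\<close>
  define g where "g u v = (-1::'a) ^ (c u + c v) * (if u < v then -1 else 1) * Z (insert v (insert u \<rho>))"
    for u v
  have supp_bd_U: "\<forall>\<tau>\<in>supp (bd Z). \<tau> \<subseteq> U"
    using supp_bd_subset_Pow[OF supp_U] by blast
  have "bd (bd Z) \<rho> = (\<Sum>u\<in>A. (-1) ^ c u * bd Z (insert u \<rho>))"
    unfolding bd_eq_sum_over_vertices[OF U supp_bd_U] A_def c_def
    by (intro sum.cong refl) (simp add: card_less_insert del: insert_iff)
  also have "\<dots> = (\<Sum>u\<in>A. \<Sum>v\<in>A - {u}. g u v)"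
  proof (intro sum.cong refl)
    fix u assume "u \<in> A"
    then have A_u: "U - insert u \<rho> = A - {u}" and u: "u \<notin> \<rho>" by (auto simp: A_def)
    have "(-1) ^ c u * ((-1) ^ card {x\<in>insert v (insert u \<rho>). x < v} * Z (insert v (insert u \<rho>)))
        = g u v" if "v \<in> A - {u}" for v
    proof -
      have "v \<notin> insert u \<rho>" using that by (auto simp: A_def)
      then have "card {x\<in>insert v (insert u \<rho>). x < v} = c v + (if u < v then 1 else 0)"
        using u by (simp add: card_less_insert c_def del: insert_iff)
      then show ?thesis by (simp add: g_def power_add)
    qed
    then show "(-1) ^ c u * bd Z (insert u \<rho>) = (\<Sum>v\<in>A - {u}. g u v)"
      unfolding bd_eq_sum_over_vertices[OF U supp_U] sum_distrib_left A_u by simp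
  qed
  also have "\<dots> = 0"
  proof (rule sum_antisymmetric_off_diagonal)
    show "g u v = - g v u" if "u \<noteq> v" for u v
      using that by (auto simp: g_def insert_commute add.commute)
  qed (use U in \<open>simp add: A_def\<close>)
  finally show "bd (bd Z) \<rho> = 0" .
qed

lemma bd_eq_0_other_coface:
  assumes bd_0: "bd W = (\<lambda>_. 0)" and \<rho>: "\<rho> \<in> supp W" and x: "x \<in> \<rho>"
  obtains \<sigma> where "\<sigma> \<in> supp W" and "\<sigma> \<noteq> \<rho>" and "\<rho> - {x} \<subseteq> \<sigma>"
proof -
  have "\<rho> \<in> cofaces W (\<rho> - {x})"
    using \<rho> x by (auto simp: cofaces_def intro!: exI[of _ x])
  moreover have "cofaces W (\<rho> - {x}) \<noteq> {\<rho>}"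
  proof
    assume "cofaces W (\<rho> - {x}) = {\<rho>}"
    then have "bd W (\<rho> - {x}) = (-1) ^ card {y\<in>\<rho>. y < the_elem (\<rho> - (\<rho> - {x}))} * W \<rho>"
      by (simp add: bd_cofaces)
    with \<rho> bd_0 show False by (simp add: supp_def)
  qed
  ultimately obtain \<sigma> where "\<sigma> \<in> cofaces W (\<rho> - {x})" "\<sigma> \<noteq> \<rho>" by blast
  then show ?thesis by (intro that) (auto simp: cofaces_def)
qed

lemma card_supp_ge_if_bd_eq_0:
  assumes bd_0: "bd W = (\<lambda>_. 0)" and \<rho>: "\<rho> \<in> supp W" and "finite (supp W)"
    and card_d: "\<And>\<tau>. \<tau> \<in> supp W \<Longrightarrow> finite \<tau> \<and> card \<tau> = d"
  shows "d + 1 \<le> card (supp W)"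
proof -
  have "\<forall>x\<in>\<rho>. \<exists>\<sigma>. \<sigma> \<in> supp W \<and> \<sigma> \<noteq> \<rho> \<and> \<rho> - {x} \<subseteq> \<sigma>"
    using bd_eq_0_other_coface[OF bd_0 \<rho>] by metis
  then obtain f where f: "\<And>x. x \<in> \<rho> \<Longrightarrow> f x \<in> supp W \<and> f x \<noteq> \<rho> \<and> \<rho> - {x} \<subseteq> f x"
    by metis
  have "inj_on f \<rho>"
  proof (rule inj_onI, rule ccontr)
    fix x y assume "x \<in> \<rho>" "y \<in> \<rho>" "f x = f y" "x \<noteq> y"
    \<comment> \<open>then f x contains both \<open>\<rho> - {x}\<close> and \<open>\<rho> - {y}\<close>, hence all of \<rho>\<close>
    then have "\<rho> \<subseteq> f x" using f by blast
    moreover have "finite (f x)" "card (f x) = card \<rho>"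
      using card_d f \<rho> \<open>x \<in> \<rho>\<close> by auto
    ultimately have "\<rho> = f x" by (simp add: card_subset_eq)
    with f \<open>x \<in> \<rho>\<close> show False by auto
  qed
  moreover have "insert \<rho> (f ` \<rho>) \<subseteq> supp W" and "\<rho> \<notin> f ` \<rho>"
    using f \<rho> by auto
  moreover have "finite \<rho>" "card \<rho> = d" using card_d \<rho> by auto
  ultimately show ?thesis
    using card_mono[OF \<open>finite (supp W)\<close>, of "insert \<rho> (f ` \<rho>)"] by (simp add: card_image)
qed

lemma components_quotient:
  fixes V :: "'v set"
  assumes "symp adj"
  obtains r where "equiv V r" and "components V adj = V // r"
proof
  let ?E = "{(x, y). x \<in> V \<and> y \<in> V \<and> adj x y}"
  have reach_V: "y \<in> V" if "(x, y) \<in> ?E\<^sup>*" "x \<in> V" for x y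
    using that by (induction rule: rtrancl_induct) auto
  have "sym (?E\<^sup>*)"
    by (rule sym_rtrancl) (use assms(1) in \<open>auto simp: sym_def dest: sympD\<close>)
  then show "equiv V (Restr (?E\<^sup>*) V)"
    by (intro equivI refl_onI sym_Int trans_Restr trans_rtrancl) (auto simp: sym_def)
  have "?E\<^sup>* `` {x} = Restr (?E\<^sup>*) V `` {x}" if "x \<in> V" for x
    using that reach_V by blast
  then show "components V adj = V // Restr (?E\<^sup>*) V"
    unfolding components_def quotient_def by blast
qed

lemma components_subset: "symp adj \<Longrightarrow> C \<in> components V adj \<Longrightarrow> C \<subseteq> V"
  by (metis components_quotient in_quotient_imp_subset)

lemma components_nonempty: "symp adj \<Longrightarrow> C \<in> components V adj \<Longrightarrow> C \<noteq> {}"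
  by (metis components_quotient in_quotient_imp_non_empty)

lemma components_disjoint:
  "symp adj \<Longrightarrow> C \<in> components V adj \<Longrightarrow> C' \<in> components V adj \<Longrightarrow> C \<noteq> C' \<Longrightarrow> C \<inter> C' = {}"
  by (metis components_quotient quotient_disj)

lemma components_closed:
  assumes "symp adj" and "C \<in> components V adj" and "x \<in> C" and "y \<in> V" and "adj x y"
  shows "y \<in> C"
proof -
  obtain z where "C = {(x, y). x \<in> V \<and> y \<in> V \<and> adj x y}\<^sup>* `` {z}"
    using assms(2) unfolding components_def quotient_def by blast
  moreover have "x \<in> V" using assms(1-3) components_subset by blast
  ultimately show ?thesis
    using assms(3-5) by (auto intro: rtrancl_into_rtrancl)
qed

lemma finite_components: "finite V \<Longrightarrow> finite (components V adj)"
  unfolding components_def quotient_def by simp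

lemma symp_facet_adj: "symp (facet_adj d)"
  unfolding facet_adj_def by (rule sympI) blast

definition faces :: "nat \<Rightarrow> nat set set \<Rightarrow> nat set set" where
  "faces d S = (\<Union>\<sigma>\<in>S. {\<tau>. \<tau> \<subseteq> \<sigma> \<and> card \<tau> = d})"

lemma
  assumes "finite S" and "\<And>\<sigma>. \<sigma> \<in> S \<Longrightarrow> finite \<sigma> \<and> card \<sigma> = d + 1"
  shows finite_faces: "finite (faces d S)"
    and card_faces_le: "card (faces d S) \<le> (d + 1) * card S"
proof -
  have finite_d_subsets: "finite {\<tau>. \<tau> \<subseteq> \<sigma> \<and> card \<tau> = d}" if "\<sigma> \<in> S" for \<sigma>
    using assms(2)[OF that] by (auto intro: finite_subset[of _ "Pow \<sigma>"])
  then show "finite (faces d S)"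
    unfolding faces_def using assms(1) by blast
  have "card {\<tau>. \<tau> \<subseteq> \<sigma> \<and> card \<tau> = d} = d + 1" if "\<sigma> \<in> S" for \<sigma>
    using assms(2)[OF that] n_subsets[of \<sigma> d] binomial_Suc_n[of d] by simp
  then have "(\<Sum>\<sigma>\<in>S. card {\<tau>. \<tau> \<subseteq> \<sigma> \<and> card \<tau> = d}) = (d + 1) * card S"
    by simp
  moreover have "card (faces d S) \<le> (\<Sum>\<sigma>\<in>S. card {\<tau>. \<tau> \<subseteq> \<sigma> \<and> card \<tau> = d})"
    unfolding faces_def by (rule card_UN_le[OF assms(1)])
  ultimately show "card (faces d S) \<le> (d + 1) * card S"
    by simp
qed

definition chain_restrict :: "nat set set \<Rightarrow> (nat set \<Rightarrow> 'a::zero) \<Rightarrow> nat set \<Rightarrow> 'a" where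
  "chain_restrict C Z \<sigma> = (if \<sigma> \<in> C then Z \<sigma> else 0)"

lemma supp_chain_restrict: "supp (chain_restrict C Z) = supp Z \<inter> C"
  by (auto simp: supp_def chain_restrict_def)

lemma chain_chain_restrict: "chain n d Z \<Longrightarrow> chain n d (chain_restrict C Z)"
  by (simp add: chain_def supp_chain_restrict)

lemma bd_chain_restrict:
  assumes "cofaces Z \<tau> \<subseteq> C"
  shows "bd (chain_restrict C Z) \<tau> = bd Z \<tau>"
proof -
  have "cofaces (chain_restrict C Z) \<tau> = cofaces Z \<tau>"
    using assms by (auto simp: cofaces_def supp_chain_restrict)
  then show ?thesis
    using assms unfolding bd_cofaces by (intro sum.cong) (auto simp: chain_restrict_def)
qed

lemma component_boundary_face:
  fixes Z :: "nat set \<Rightarrow> 'a::field"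
  assumes Z: "cycle n d Z" and C: "C \<in> components (supp Z - S) (facet_adj d)"
    and \<tau>: "\<tau> \<in> supp (bd (chain_restrict C Z))"
  obtains \<sigma> \<sigma>' where "\<sigma> \<in> C" and "\<sigma>' \<in> S" and "\<tau> \<subseteq> \<sigma>" and "\<tau> \<subseteq> \<sigma>'" and "card \<tau> = d"
proof -
  have bd_ZC: "bd (chain_restrict C Z) \<tau> \<noteq> 0" using \<tau> by (simp add: supp_def)
  then have "cofaces (chain_restrict C Z) \<tau> \<noteq> {}" by (rule cofaces_nonempty_if_bd_nonzero)
  then obtain \<sigma> v where \<sigma>: "\<sigma> \<in> supp Z" "\<sigma> \<in> C" and v: "v \<notin> \<tau>" "\<sigma> = insert v \<tau>"
    by (auto simp: cofaces_def supp_chain_restrict)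
  have "simplex n d \<sigma>" using Z \<sigma> by (simp add: cycle_def chain_def)
  then have "finite \<sigma>" "card \<sigma> = d + 1"
    by (auto simp: simplex_def intro: finite_subset[OF _ finite_atLeastAtMost])
  then have card_\<tau>: "card \<tau> = d" using v by simp
  have "\<not> cofaces Z \<tau> \<subseteq> C"
  proof
    assume "cofaces Z \<tau> \<subseteq> C"
    then have "bd (chain_restrict C Z) \<tau> = bd Z \<tau>" by (rule bd_chain_restrict)
    with bd_ZC Z show False by (simp add: cycle_def)
  qed
  then obtain \<sigma>' w where \<sigma>': "\<sigma>' \<in> supp Z" "\<sigma>' \<notin> C" and w: "w \<notin> \<tau>" "\<sigma>' = insert w \<tau>"
    by (auto simp: cofaces_def)
  have "facet_adj d \<sigma> \<sigma>'"
    unfolding facet_adj_def using \<sigma> \<sigma>' v w card_\<tau> by blast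
  then have "\<sigma>' \<in> S"
    using components_closed[OF symp_facet_adj C \<open>\<sigma> \<in> C\<close>] \<sigma>' by blast
  then show ?thesis
    using that \<sigma> v w card_\<tau> by blast
qed

lemma component_boundaries_disjoint:
  fixes Z :: "nat set \<Rightarrow> 'a::field"
  assumes Z: "cycle n d Z" and C: "C \<in> components (supp Z - S) (facet_adj d)"
    and C': "C' \<in> components (supp Z - S) (facet_adj d)" and "C \<noteq> C'"
  shows "supp (bd (chain_restrict C Z)) \<inter> supp (bd (chain_restrict C' Z)) = {}"
proof (rule ccontr)
  assume "\<not> ?thesis"
  then obtain \<tau> \<sigma> \<sigma>' where "\<sigma> \<in> C" "\<sigma>' \<in> C'" "\<tau> \<subseteq> \<sigma>" "\<tau> \<subseteq> \<sigma>'" "card \<tau> = d"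
    by (metis component_boundary_face[OF Z C] component_boundary_face[OF Z C'] disjoint_iff)
  moreover have "C \<inter> C' = {}"
    using components_disjoint[OF symp_facet_adj C C' \<open>C \<noteq> C'\<close>] .
  ultimately have "facet_adj d \<sigma> \<sigma>'"
    unfolding facet_adj_def by blast
  then have "\<sigma>' \<in> C"
    using components_closed[OF symp_facet_adj C \<open>\<sigma> \<in> C\<close>] components_subset[OF symp_facet_adj C'] \<open>\<sigma>' \<in> C'\<close>
    by blast
  with \<open>\<sigma>' \<in> C'\<close> \<open>C \<inter> C' = {}\<close> show False by blast
qed

lemma component_boundary_card:
  fixes Z :: "nat set \<Rightarrow> 'a::field"
  assumes Z: "simple_cycle n d Z" and "S \<subseteq> supp Z" and "S \<noteq> {}"
    and C: "C \<in> components (supp Z - S) (facet_adj d)"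
  shows "d + 1 \<le> card (supp (bd (chain_restrict C Z)))"
proof -
  let ?ZC = "chain_restrict C Z"
  have cyc: "cycle n d Z" using Z by (simp add: simple_cycle_def)
  then have chain: "chain n d ?ZC" by (simp add: cycle_def chain_chain_restrict)
  have "bd ?ZC \<noteq> (\<lambda>_. 0)"
  proof
    assume "bd ?ZC = (\<lambda>_. 0)"
    with chain Z obtain c where c: "?ZC = (\<lambda>\<sigma>. c * Z \<sigma>)"
      by (auto simp: simple_cycle_def cycle_def supp_chain_restrict)
    obtain \<sigma>0 where "\<sigma>0 \<in> S" using \<open>S \<noteq> {}\<close> by blast
    have "C \<subseteq> supp Z - S" using components_subset[OF symp_facet_adj C] .
    then have "\<sigma>0 \<notin> C" using \<open>\<sigma>0 \<in> S\<close> by blast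
    then have "c = 0"
      using fun_cong[OF c, of \<sigma>0] \<open>\<sigma>0 \<in> S\<close> assms(2) by (auto simp: supp_def chain_restrict_def)
    obtain \<sigma> where "\<sigma> \<in> C" using components_nonempty[OF symp_facet_adj C] by blast
    with fun_cong[OF c, of \<sigma>] \<open>c = 0\<close> \<open>C \<subseteq> supp Z - S\<close> show False
      by (auto simp: supp_def chain_restrict_def)
  qed
  then obtain \<rho> where \<rho>: "\<rho> \<in> supp (bd ?ZC)" by (auto simp: supp_def)
  have supp_ZC: "\<forall>\<sigma>\<in>supp ?ZC. \<sigma> \<subseteq> {1..n}"
    using chain by (auto simp: chain_def simplex_def)
  have "finite (supp (bd ?ZC))"
    using supp_bd_subset_Pow[OF supp_ZC] by (rule finite_subset) simp
  moreover have "finite \<tau> \<and> card \<tau> = d" if "\<tau> \<in> supp (bd ?ZC)" for \<tau>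
    using component_boundary_face[OF cyc C that] supp_bd_subset_Pow[OF supp_ZC] that
    by (metis PowD finite_atLeastAtMost finite_subset subsetD)
  ultimately show ?thesis
    using card_supp_ge_if_bd_eq_0[OF bd_bd_eq_0[OF _ supp_ZC] \<rho>] by simp
qed

theorem theorem5p5:
  fixes Z :: "nat set \<Rightarrow> 'a::field" and n d s :: nat and S :: "nat set set"
  assumes "d \<ge> 1" and "simple_cycle n d Z" and "s \<ge> 1"
    and "S \<subseteq> supp Z" and "card S = s"
  shows "card (components (supp Z - S) (facet_adj d)) \<le> s"
proof -
  let ?comps = "components (supp Z - S) (facet_adj d)"
  let ?B = "\<lambda>C. supp (bd (chain_restrict C Z))"
  have cyc: "cycle n d Z" using assms(2) by (simp add: simple_cycle_def)
  have "finite S" "S \<noteq> {}" using assms(3,5) by (auto intro: card_ge_0_finite)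
  have S_simplices: "finite \<sigma> \<and> card \<sigma> = d + 1" if "\<sigma> \<in> S" for \<sigma>
    using cyc that assms(4)
    by (auto simp: cycle_def chain_def simplex_def intro: finite_subset[OF _ finite_atLeastAtMost])
  have B_faces: "?B C \<subseteq> faces d S" if "C \<in> ?comps" for C
    using component_boundary_face[OF cyc that] by (auto simp: faces_def)
  have "finite ?comps"
    using cyc by (intro finite_components) (simp add: cycle_def chain_def)
  have "(d + 1) * card ?comps = (\<Sum>C\<in>?comps. d + 1)" by simp
  also have "\<dots> \<le> (\<Sum>C\<in>?comps. card (?B C))"
    by (intro sum_mono component_boundary_card[OF assms(2,4) \<open>S \<noteq> {}\<close>])
  also have "\<dots> = card (\<Union>C\<in>?comps. ?B C)"
    using \<open>finite ?comps\<close> finite_faces[OF \<open>finite S\<close> S_simplices] B_faces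
      component_boundaries_disjoint[OF cyc]
    by (intro card_UN_disjoint[symmetric]) (auto dest: finite_subset)
  also have "\<dots> \<le> card (faces d S)"
    using B_faces by (intro card_mono finite_faces[OF \<open>finite S\<close> S_simplices] UN_least)
  also have "\<dots> \<le> (d + 1) * s"
    using card_faces_le[OF \<open>finite S\<close> S_simplices] assms(5) by simp
  finally show ?thesis by (rule mult_left_le_imp_le) simp
qed

end
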